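(* Suppose $\hat R\ge\frac{5r}{4}+\sigma\sqrt{2\ln(8d)}$ and $r\ge2\sigma$. Then the $\hat R$-truncated $\sigma$-perturbed adversary $\mathcal{A}'_\sigma$ has $\left(r,\frac{\sigma^2}{r},\frac{1}{80}\right)$ margins.
   Context: Multiple parameter setting with Greedy maintaining per-arm least squares estimates $\hat\beta_i^t$. Given an adaptive adversary choosing $\mu_1^t,\dots,\mu_k^t$ ($\|\mu_i^t\|\le1$) from the history, $\mathcal{A}'_\sigma$ outputs contexts $x_i^t=\mu_i^t+(Q_i^t)^{-1}z_i^t$, where $Q_i^t$ is orthonormal with $Q_i^t\hat\beta_i^t=(\|\hat\beta_i^t\|,0,\dots,0)$ and the coordinates of $z_i^t\in\mathbb{R}^d$ are independent $\mathcal{N}(0,\sigma^2)$ variables conditioned on lying in $[-\hat R,\hat R]$. A distribution $\mathcal{D}$ has $(r,\alpha,\gamma)$ margins if for all $\beta\ne0$ and $b\le r\|\beta\|$, with $e\sim\mathcal{D}$, $\Pr[\beta\cdot e>b+\alpha\|\beta\|\mid\beta\cdot e\ge b]\ge\gamma$; the adversary has $(r,\alpha,\gamma)$ margins if the distribution of every perturbation $(Q_i^t)^{-1}z_i^t$ (for every history) does. *)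

theory Defs
  imports "HOL-Probability.Probability"
begin

definition trunc_normal :: "real \<Rightarrow> real \<Rightarrow> real measure" where
  "trunc_normal \<sigma> R = density lborel (\<lambda>x. ennreal
      (indicator {-R..R} x * normal_density 0 \<sigma> x /
       measure (density lborel (\<lambda>y. ennreal (normal_density 0 \<sigma> y))) {-R..R}))"

definition perturbation_distr :: "real \<Rightarrow> real \<Rightarrow> real^('d::finite)^'d \<Rightarrow> (real^'d) measure" where
  "perturbation_distr \<sigma> R Q =
     distr (PiM UNIV (\<lambda>_::'d. trunc_normal \<sigma> R)) borel
       (\<lambda>z. matrix_inv Q *v (\<chi> i. z i))"

definition has_margins :: "('a::real_inner) measure \<Rightarrow> real \<Rightarrow> real \<Rightarrow> real \<Rightarrow> bool" where
  "has_margins D r \<alpha> \<gamma> \<longleftrightarrow>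
     (\<forall>\<beta>. \<beta> \<noteq> 0 \<longrightarrow> (\<forall>b. b \<le> r * norm \<beta> \<longrightarrow>
        cond_prob D (\<lambda>e. \<beta> \<bullet> e > b + \<alpha> * norm \<beta>) (\<lambda>e. \<beta> \<bullet> e \<ge> b) \<ge> \<gamma>))"

definition adversary_has_margins :: "real \<Rightarrow> real \<Rightarrow> ('d::finite) itself \<Rightarrow> real \<Rightarrow> real \<Rightarrow> real \<Rightarrow> bool" where
  "adversary_has_margins \<sigma> R _ r \<alpha> \<gamma> \<longleftrightarrow>
     (\<forall>Q::real^'d^'d. orthogonal_matrix Q \<longrightarrow> has_margins (perturbation_distr \<sigma> R Q) r \<alpha> \<gamma>)"

end

theory Submission
  imports Defs
begin

(*
  Let q(t) be the probability that N(0, sigma^2) exceeds t. For orthogonal Q we have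
  beta . (Q^-1 z) = |beta| (u . z) with u = Q beta / |beta| a unit vector, so the margin
  condition only concerns the statistic X = u . z and the threshold b' = b / |beta| <= r.
  The truncated product is the Gaussian product conditioned on the cube [-R,R]^d, under
  which X is N(0, sigma^2) and the complement of the cube has mass at most 2 d q(R). Hence
  the conditional probability is at least (q(b' + sigma^2/r) - 2 d q(R)) / q(b').
  Shifting the Gaussian density by t multiplies it by exp(-(x t + t^2/2) / sigma^2); this
  compares q(s + t) with q(s) in both directions and shows that the small shift
  sigma^2/r <= sigma/2 keeps a constant fraction of q(b'), while R is so large that
  2 d q(R) <= q(r)/128.
*)

section \<open>Tails of the centered normal distribution\<close>

abbreviation centered_normal :: "real \<Rightarrow> real measure" where
  "centered_normal \<sigma> \<equiv> density lborel (\<lambda>x. ennreal (normal_density 0 \<sigma> x))"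

abbreviation normal_tail :: "real \<Rightarrow> real \<Rightarrow> real" where
  "normal_tail \<sigma> t \<equiv> measure (centered_normal \<sigma>) {t<..}"

lemma prob_space_centered_normal: "0 < \<sigma> \<Longrightarrow> prob_space (centered_normal \<sigma>)"
  by (rule prob_space_normal_density) simp

lemma normal_density_shift:
  "normal_density 0 \<sigma> (x + t) = exp (- (x * t + t\<^sup>2 / 2) / \<sigma>\<^sup>2) * normal_density 0 \<sigma> x"
proof -
  have "- (x + t)\<^sup>2 / (2 * \<sigma>\<^sup>2) = - (x * t + t\<^sup>2 / 2) / \<sigma>\<^sup>2 + - x\<^sup>2 / (2 * \<sigma>\<^sup>2)"
    by (cases "\<sigma> = 0") (simp_all add: field_simps power2_eq_square)
  then show ?thesis
    unfolding normal_density_def diff_zero by (simp only: exp_add ac_simps)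
qed

lemma emeasure_centered_normal_shift:
  "emeasure (centered_normal \<sigma>) {s + t<..} =
     (\<integral>\<^sup>+x. ennreal (normal_density 0 \<sigma> (x + t)) * indicator {s<..} x \<partial>lborel)"
proof -
  have "emeasure (centered_normal \<sigma>) {s + t<..} =
      (\<integral>\<^sup>+x. ennreal (normal_density 0 \<sigma> x) * indicator {s + t<..} x \<partial>lborel)"
    by (subst emeasure_density) auto
  also have "\<dots> = ennreal \<bar>1\<bar> * (\<integral>\<^sup>+x. ennreal (normal_density 0 \<sigma> (t + 1 * x)) *
      indicator {s + t<..} (t + 1 * x) \<partial>lborel)"
    by (rule nn_integral_real_affine) auto
  also have "\<dots> = (\<integral>\<^sup>+x. ennreal (normal_density 0 \<sigma> (x + t)) * indicator {s<..} x \<partial>lborel)"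
    by (auto intro!: nn_integral_cong simp: indicator_def add.commute)
  finally show ?thesis .
qed

lemma normal_tail_shift_le:
  assumes "0 < \<sigma>" "0 \<le> t"
  shows "normal_tail \<sigma> (s + t) \<le> exp (- (s * t + t\<^sup>2 / 2) / \<sigma>\<^sup>2) * normal_tail \<sigma> s"
proof -
  interpret prob_space "centered_normal \<sigma>"
    using prob_space_centered_normal assms(1) .
  let ?c = "exp (- (s * t + t\<^sup>2 / 2) / \<sigma>\<^sup>2)"
  have "normal_density 0 \<sigma> (x + t) \<le> ?c * normal_density 0 \<sigma> x" if "s < x" for x
  proof -
    have "(s * t + t\<^sup>2 / 2) / \<sigma>\<^sup>2 \<le> (x * t + t\<^sup>2 / 2) / \<sigma>\<^sup>2"
      using that assms by (intro divide_right_mono) (auto intro: mult_right_mono)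
    then have "exp (- (x * t + t\<^sup>2 / 2) / \<sigma>\<^sup>2) \<le> ?c"
      by (simp only: minus_divide_left[symmetric] exp_le_cancel_iff neg_le_iff_le)
    then show ?thesis
      unfolding normal_density_shift by (simp add: mult_right_mono)
  qed
  then have "emeasure (centered_normal \<sigma>) {s + t<..} \<le>
      (\<integral>\<^sup>+x. ennreal ?c * (ennreal (normal_density 0 \<sigma> x) * indicator {s<..} x) \<partial>lborel)"
    unfolding emeasure_centered_normal_shift
    by (intro nn_integral_mono) (auto simp: ennreal_mult'[symmetric] indicator_def)
  also have "\<dots> = ennreal ?c * emeasure (centered_normal \<sigma>) {s<..}"
    by (subst nn_integral_cmult) (auto simp: emeasure_density)
  finally show ?thesis
    by (simp add: emeasure_eq_measure ennreal_mult'[symmetric])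
qed

lemma normal_tail_shift_ge:
  assumes "0 < \<sigma>" "0 \<le> t" "0 \<le> M"
  shows "exp (- ((s + M) * t + t\<^sup>2 / 2) / \<sigma>\<^sup>2) * (normal_tail \<sigma> s - normal_tail \<sigma> (s + M))
    \<le> normal_tail \<sigma> (s + t)"
proof -
  interpret prob_space "centered_normal \<sigma>"
    using prob_space_centered_normal assms(1) .
  let ?c = "exp (- ((s + M) * t + t\<^sup>2 / 2) / \<sigma>\<^sup>2)"
  have slab: "normal_tail \<sigma> s - normal_tail \<sigma> (s + M) = measure (centered_normal \<sigma>) {s<..s + M}"
  proof -
    have "{s<..s + M} = {s<..} - {s + M<..}" by auto
    then show ?thesis
      using assms(3) by (simp add: finite_measure_Diff)
  qed
  have density_le: "?c * normal_density 0 \<sigma> x \<le> normal_density 0 \<sigma> (x + t)" if "x \<le> s + M" for x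
  proof -
    have "(x * t + t\<^sup>2 / 2) / \<sigma>\<^sup>2 \<le> ((s + M) * t + t\<^sup>2 / 2) / \<sigma>\<^sup>2"
      using that assms by (intro divide_right_mono) (auto intro: mult_right_mono)
    then have "?c \<le> exp (- (x * t + t\<^sup>2 / 2) / \<sigma>\<^sup>2)"
      by (simp only: minus_divide_left[symmetric] exp_le_cancel_iff neg_le_iff_le)
    then show ?thesis
      unfolding normal_density_shift by (simp add: mult_right_mono)
  qed
  have "ennreal ?c * emeasure (centered_normal \<sigma>) {s<..s + M} =
      (\<integral>\<^sup>+x. ennreal ?c * (ennreal (normal_density 0 \<sigma> x) * indicator {s<..s + M} x) \<partial>lborel)"
    by (subst nn_integral_cmult) (auto simp: emeasure_density)
  also have "\<dots> \<le> emeasure (centered_normal \<sigma>) {s + t<..}"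
    unfolding emeasure_centered_normal_shift using density_le
    by (intro nn_integral_mono) (auto simp: ennreal_mult'[symmetric] indicator_def)
  finally show ?thesis
    by (simp add: emeasure_eq_measure ennreal_mult'[symmetric] slab)
qed

lemma measure_centered_normal_lessThan:
  "measure (centered_normal \<sigma>) {..<- s} = normal_tail \<sigma> s"
proof -
  have "emeasure (centered_normal \<sigma>) {..<- s} =
      (\<integral>\<^sup>+x. ennreal (normal_density 0 \<sigma> x) * indicator {..<- s} x \<partial>lborel)"
    by (subst emeasure_density) auto
  also have "\<dots> = ennreal \<bar>- 1\<bar> * (\<integral>\<^sup>+x. ennreal (normal_density 0 \<sigma> (0 + - 1 * x)) *
      indicator {..<- s} (0 + - 1 * x) \<partial>lborel)"
    by (rule nn_integral_real_affine) auto
  also have "\<dots> = (\<integral>\<^sup>+x. ennreal (normal_density 0 \<sigma> x) * indicator {s<..} x \<partial>lborel)"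
    by (auto intro!: nn_integral_cong simp: indicator_def normal_density_def)
  also have "\<dots> = emeasure (centered_normal \<sigma>) {s<..}"
    by (subst emeasure_density) auto
  finally show ?thesis
    by (simp add: measure_def)
qed

lemma emeasure_centered_normal_singleton: "emeasure (centered_normal \<sigma>) {s} = 0"
proof -
  have "emeasure (centered_normal \<sigma>) {s} =
      (\<integral>\<^sup>+x. ennreal (normal_density 0 \<sigma> x) * indicator {s} x \<partial>lborel)"
    by (subst emeasure_density) auto
  also have "\<dots> = 0"
    by (rule nn_integral_null_set) (simp add: null_sets_def)
  finally show ?thesis .
qed

lemma measure_centered_normal_atLeast:
  assumes "0 < \<sigma>"
  shows "measure (centered_normal \<sigma>) {s..} = normal_tail \<sigma> s"
proof -
  interpret prob_space "centered_normal \<sigma>"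
    using prob_space_centered_normal assms .
  have "{s..} = {s} \<union> {s<..}" by auto
  moreover have "measure (centered_normal \<sigma>) ({s} \<union> {s<..}) =
      measure (centered_normal \<sigma>) {s} + normal_tail \<sigma> s"
    by (rule finite_measure_Union) auto
  ultimately show ?thesis
    by (simp add: measure_def emeasure_centered_normal_singleton)
qed

lemma normal_tail_zero:
  assumes "0 < \<sigma>"
  shows "normal_tail \<sigma> 0 = 1 / 2"
proof -
  interpret prob_space "centered_normal \<sigma>"
    using prob_space_centered_normal assms .
  have "measure (centered_normal \<sigma>) ({..<0} \<union> {0..}) =
      measure (centered_normal \<sigma>) {..<0} + measure (centered_normal \<sigma>) {0..}"
    by (rule finite_measure_Union) auto
  moreover have "{..<0} \<union> {0::real..} = space (centered_normal \<sigma>)" by auto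
  ultimately have "1 = measure (centered_normal \<sigma>) {..<0} + measure (centered_normal \<sigma>) {0..}"
    using prob_space by simp
  then show ?thesis
    using measure_centered_normal_lessThan[of \<sigma> 0] measure_centered_normal_atLeast[OF assms, of 0]
    by simp
qed

lemma normal_tail_antimono:
  assumes "0 < \<sigma>" "s \<le> t"
  shows "normal_tail \<sigma> t \<le> normal_tail \<sigma> s"
proof -
  interpret prob_space "centered_normal \<sigma>"
    using prob_space_centered_normal assms(1) .
  show ?thesis
    using assms(2) by (intro finite_measure_mono) auto
qed

lemma normal_tail_pos:
  assumes "0 < \<sigma>"
  shows "0 < normal_tail \<sigma> t"
proof (cases "t \<le> 0")
  case True
  then show ?thesis
    using normal_tail_antimono[OF assms True] normal_tail_zero[OF assms] by simp
next
  case False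
  have "normal_tail \<sigma> (0 + \<sigma>) \<le> exp (- (0 * \<sigma> + \<sigma>\<^sup>2 / 2) / \<sigma>\<^sup>2) * normal_tail \<sigma> 0"
    using assms by (intro normal_tail_shift_le) auto
  also have "\<dots> < normal_tail \<sigma> 0"
    using assms normal_tail_zero[OF assms] by simp
  finally have "0 < normal_tail \<sigma> 0 - normal_tail \<sigma> (0 + \<sigma>)" by simp
  then have "0 < exp (- ((0 + \<sigma>) * t + t\<^sup>2 / 2) / \<sigma>\<^sup>2) * (normal_tail \<sigma> 0 - normal_tail \<sigma> (0 + \<sigma>))"
    by simp
  also have "\<dots> \<le> normal_tail \<sigma> (0 + t)"
    using assms False by (intro normal_tail_shift_ge) auto
  finally show ?thesis by simp
qed

lemma exp_minus_numeral_bounds: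
  shows "1 / 21 \<le> exp (- 3 :: real)" and "1 / 8 \<le> exp (- 2 :: real)"
    and "exp (- 2 :: real) \<le> 1 / 3" and "exp (- 5 :: real) \<le> 1 / 32"
proof -
  have e: "2 \<le> exp (1::real)" "exp (1::real) \<le> 272 / 100"
    using exp_ge_add_one_self[of 1] e_less_272 by simp_all
  have pow: "exp (real n) = exp 1 ^ n" for n
    by (simp add: exp_of_nat_mult[symmetric])
  have "exp (3::real) \<le> (272 / 100) ^ 3"
    using pow[of 3] e by (simp add: power_mono)
  then show "1 / 21 \<le> exp (- 3 :: real)"
    by (simp add: exp_minus field_simps)
  have "exp (2::real) \<le> (272 / 100) ^ 2"
    using pow[of 2] e by (simp add: power_mono)
  then show "1 / 8 \<le> exp (- 2 :: real)"
    by (simp add: exp_minus field_simps)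
  show "exp (- 2 :: real) \<le> 1 / 3"
    using exp_ge_add_one_self[of 2] by (simp add: exp_minus field_simps)
  have "(2::real) ^ 5 \<le> exp 5"
    using pow[of 5] power_mono[OF e(1), of 5] by simp
  then show "exp (- 5 :: real) \<le> 1 / 32"
    by (simp add: exp_minus field_simps)
qed

lemma normal_tail_two_sigma_le:
  assumes "0 < \<sigma>" "0 \<le> c"
  shows "normal_tail \<sigma> (c + 2 * \<sigma>) \<le> normal_tail \<sigma> c / 3"
proof -
  have "((2 * \<sigma>)\<^sup>2 / 2) / \<sigma>\<^sup>2 \<le> (c * (2 * \<sigma>) + (2 * \<sigma>)\<^sup>2 / 2) / \<sigma>\<^sup>2"
    using assms by (intro divide_right_mono) auto
  moreover have "((2 * \<sigma>)\<^sup>2 / 2) / \<sigma>\<^sup>2 = 2"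
    using assms by (simp add: power2_eq_square)
  ultimately have "exp (- (c * (2 * \<sigma>) + (2 * \<sigma>)\<^sup>2 / 2) / \<sigma>\<^sup>2) \<le> exp (- 2)"
    by (simp only: minus_divide_left[symmetric] exp_le_cancel_iff neg_le_iff_le)
  also have "\<dots> \<le> 1 / 3"
    by (rule exp_minus_numeral_bounds)
  finally have "exp (- (c * (2 * \<sigma>) + (2 * \<sigma>)\<^sup>2 / 2) / \<sigma>\<^sup>2) * normal_tail \<sigma> c \<le> 1 / 3 * normal_tail \<sigma> c"
    by (intro mult_right_mono) simp_all
  with normal_tail_shift_le[of \<sigma> "2 * \<sigma>" c] assms show ?thesis
    by simp
qed

lemma normal_tail_far_small:
  assumes s: "0 < \<sigma>" and r: "2 * \<sigma> \<le> r" and d: "1 \<le> d"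
    and R: "5 * r / 4 + \<sigma> * sqrt (2 * ln (8 * d)) \<le> R"
  shows "2 * d * normal_tail \<sigma> R \<le> normal_tail \<sigma> r / 128"
proof -
  define q where "q = sqrt (2 * ln (8 * d))"
  define D where "D = R - r"
  have r0: "0 \<le> r"
    using s r by simp
  have "exp 2 \<le> 8 * d"
    using d exp_minus_numeral_bounds(2) by (simp add: exp_minus field_simps)
  then have ln8d: "2 \<le> ln (8 * d)"
    using d by (simp add: ln_ge_iff)
  then have q2: "2 \<le> q"
    unfolding q_def using real_sqrt_le_mono[of 4 "2 * ln (8 * d)"] by simp
  have D: "r / 4 + \<sigma> * q \<le> D"
    using R unfolding D_def q_def by simp
  have sq0: "0 \<le> \<sigma> * q"
    using s q2 by simp
  then have D0: "0 \<le> D"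
    using D r0 by linarith
  have "5 * \<sigma>\<^sup>2 \<le> r * D"
  proof -
    have "\<sigma>\<^sup>2 \<le> r * (r / 4)"
      using mult_mono[OF r r] s r by (simp add: power2_eq_square algebra_simps)
    moreover have "4 * \<sigma>\<^sup>2 \<le> r * (\<sigma> * q)"
      using mult_mono[OF r, of "2 * \<sigma>" "\<sigma> * q"] s q2 r0 by (simp add: power2_eq_square)
    moreover have "r * (r / 4 + \<sigma> * q) \<le> r * D"
      using D r s by (intro mult_left_mono) auto
    ultimately show ?thesis
      by (simp add: distrib_left)
  qed
  moreover have "\<sigma>\<^sup>2 * ln (8 * d) \<le> D\<^sup>2 / 2"
  proof -
    have "(\<sigma> * q)\<^sup>2 \<le> D\<^sup>2"
      using D r0 sq0 by (intro power_mono) auto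
    then show ?thesis
      unfolding q_def using ln8d by (simp add: power_mult_distrib)
  qed
  ultimately have "5 + ln (8 * d) \<le> (r * D + D\<^sup>2 / 2) / \<sigma>\<^sup>2"
    using s by (simp add: field_simps)
  then have "exp (- (r * D + D\<^sup>2 / 2) / \<sigma>\<^sup>2) \<le> exp (- (5 + ln (8 * d)))"
    by (simp only: minus_divide_left[symmetric] exp_le_cancel_iff neg_le_iff_le)
  also have "\<dots> = exp (- 5) / (8 * d)"
    using d by (simp add: exp_diff)
  also have "\<dots> \<le> 1 / (256 * d)"
    using exp_minus_numeral_bounds(4) d by (simp add: field_simps)
  finally have "exp (- (r * D + D\<^sup>2 / 2) / \<sigma>\<^sup>2) * normal_tail \<sigma> r \<le> 1 / (256 * d) * normal_tail \<sigma> r"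
    by (intro mult_right_mono) simp_all
  moreover have "normal_tail \<sigma> (r + D) \<le> exp (- (r * D + D\<^sup>2 / 2) / \<sigma>\<^sup>2) * normal_tail \<sigma> r"
    using s D0 by (rule normal_tail_shift_le)
  ultimately have "normal_tail \<sigma> R \<le> normal_tail \<sigma> r / (256 * d)"
    unfolding D_def by simp
  then show ?thesis
    using d by (simp add: field_simps)
qed

lemma normal_tail_small_shift_ge:
  assumes s: "0 < \<sigma>" and "0 \<le> c" "0 \<le> a" and k: "(c + 2 * \<sigma>) * a + a\<^sup>2 / 2 \<le> k * \<sigma>\<^sup>2"
  shows "exp (- k) * (2 / 3 * normal_tail \<sigma> c) \<le> normal_tail \<sigma> (c + a)"
proof -
  let ?e = "exp (- ((c + 2 * \<sigma>) * a + a\<^sup>2 / 2) / \<sigma>\<^sup>2)"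
  have "((c + 2 * \<sigma>) * a + a\<^sup>2 / 2) / \<sigma>\<^sup>2 \<le> k"
    using s k by (simp add: pos_divide_le_eq)
  then have "exp (- k) \<le> ?e"
    by (simp only: minus_divide_left[symmetric] exp_le_cancel_iff neg_le_iff_le)
  moreover have "2 / 3 * normal_tail \<sigma> c \<le> normal_tail \<sigma> c - normal_tail \<sigma> (c + 2 * \<sigma>)"
    using normal_tail_two_sigma_le[OF s \<open>0 \<le> c\<close>] by simp
  ultimately have "exp (- k) * (2 / 3 * normal_tail \<sigma> c) \<le>
      ?e * (normal_tail \<sigma> c - normal_tail \<sigma> (c + 2 * \<sigma>))"
    by (intro mult_mono) simp_all
  also have "\<dots> \<le> normal_tail \<sigma> (c + a)"
    using assms by (intro normal_tail_shift_ge) auto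
  finally show ?thesis .
qed

lemma normal_tail_margin:
  assumes s: "0 < \<sigma>" and r: "2 * \<sigma> \<le> r" and d: "1 \<le> d"
    and R: "5 * r / 4 + \<sigma> * sqrt (2 * ln (8 * d)) \<le> R" and b: "b \<le> r"
  shows "normal_tail \<sigma> b / 80 \<le> normal_tail \<sigma> (b + \<sigma>\<^sup>2 / r) - 2 * d * normal_tail \<sigma> R"
proof -
  define a where "a = \<sigma>\<^sup>2 / r"
  have r0: "0 < r"
    using s r by simp
  have a0: "0 \<le> a" and ar: "a * r = \<sigma>\<^sup>2"
    using r0 by (simp_all add: a_def)
  have a_sigma: "2 * \<sigma> * a \<le> \<sigma>\<^sup>2"
    using mult_left_mono[OF r a0] ar by (simp add: mult.commute)
  then have "a \<le> \<sigma> / 2"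
    using s by (simp add: power2_eq_square field_simps)
  then have a_sq: "a\<^sup>2 / 2 \<le> \<sigma>\<^sup>2 / 8"
    using a0 power_mono[of a "\<sigma> / 2" 2] by (simp add: power_divide)
  have far: "2 * d * normal_tail \<sigma> R \<le> normal_tail \<sigma> r / 128"
    using normal_tail_far_small[OF s r d R] .
  show ?thesis
  proof (cases "0 \<le> b")
    case True
    have "a * b \<le> \<sigma>\<^sup>2"
      using mult_left_mono[OF b a0] ar by simp
    then have "(b + 2 * \<sigma>) * a + a\<^sup>2 / 2 \<le> 3 * \<sigma>\<^sup>2"
      using a_sigma a_sq by (simp add: algebra_simps) (use zero_le_power2[of \<sigma>] in linarith)
    then have "exp (- 3) * (2 / 3 * normal_tail \<sigma> b) \<le> normal_tail \<sigma> (b + a)"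
      using s True a0 by (intro normal_tail_small_shift_ge) auto
    moreover have "1 / 21 * (2 / 3 * normal_tail \<sigma> b) \<le> exp (- 3) * (2 / 3 * normal_tail \<sigma> b)"
      using exp_minus_numeral_bounds(1) by (intro mult_right_mono) simp_all
    moreover have "normal_tail \<sigma> r \<le> normal_tail \<sigma> b"
      using normal_tail_antimono[OF s b] .
    ultimately show ?thesis
      using far measure_nonneg[of "centered_normal \<sigma>" "{b<..}"] unfolding a_def by linarith
  next
    case False
    have "(0 + 2 * \<sigma>) * a + a\<^sup>2 / 2 \<le> 2 * \<sigma>\<^sup>2"
      using a_sigma a_sq by (simp add: algebra_simps) (use zero_le_power2[of \<sigma>] in linarith)
    then have "exp (- 2) * (2 / 3 * normal_tail \<sigma> 0) \<le> normal_tail \<sigma> (0 + a)"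
      using s a0 by (intro normal_tail_small_shift_ge) auto
    moreover have "1 / 8 * (2 / 3 * normal_tail \<sigma> 0) \<le> exp (- 2) * (2 / 3 * normal_tail \<sigma> 0)"
      using exp_minus_numeral_bounds(2) by (intro mult_right_mono) simp_all
    moreover have "normal_tail \<sigma> (0 + a) \<le> normal_tail \<sigma> (b + a)"
      using False by (intro normal_tail_antimono[OF s]) auto
    moreover have "normal_tail \<sigma> r \<le> normal_tail \<sigma> 0"
      using normal_tail_antimono[OF s] r0 by simp
    moreover have "normal_tail \<sigma> b \<le> 1"
      using prob_space.prob_le_1[OF prob_space_centered_normal[OF s]] .
    ultimately show ?thesis
      using far normal_tail_zero[OF s] unfolding a_def by linarith
  qed
qed

section \<open>Truncated Gaussian products\<close>

abbreviation central_mass :: "real \<Rightarrow> real \<Rightarrow> real" where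
  "central_mass \<sigma> R \<equiv> measure (centered_normal \<sigma>) {-R..R}"

lemma central_mass_eq:
  assumes "0 < \<sigma>" "0 \<le> R"
  shows "central_mass \<sigma> R = 1 - 2 * normal_tail \<sigma> R"
proof -
  interpret prob_space "centered_normal \<sigma>"
    using prob_space_centered_normal assms(1) .
  have "measure (centered_normal \<sigma>) ({-R..R} \<union> {R<..}) = central_mass \<sigma> R + normal_tail \<sigma> R"
    by (rule finite_measure_Union) auto
  moreover have "measure (centered_normal \<sigma>) ({..<-R} \<union> ({-R..R} \<union> {R<..})) =
      measure (centered_normal \<sigma>) {..<-R} + measure (centered_normal \<sigma>) ({-R..R} \<union> {R<..})"
    using assms(2) by (intro finite_measure_Union) auto
  moreover have "{..<-R} \<union> ({-R..R} \<union> {R<..}) = space (centered_normal \<sigma>)"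
    by auto
  ultimately show ?thesis
    using prob_space measure_centered_normal_lessThan[of \<sigma> R] by simp
qed

lemma central_mass_pos:
  assumes "0 < \<sigma>" "0 < R"
  shows "0 < central_mass \<sigma> R"
proof -
  have "normal_tail \<sigma> (0 + R) \<le> exp (- (0 * R + R\<^sup>2 / 2) / \<sigma>\<^sup>2) * normal_tail \<sigma> 0"
    using assms by (intro normal_tail_shift_le) auto
  also have "\<dots> < normal_tail \<sigma> 0"
    using assms normal_tail_zero[OF assms(1)] by simp
  finally show ?thesis
    using assms central_mass_eq[of \<sigma> R] normal_tail_zero[OF assms(1)] by simp
qed

lemma sets_trunc_normal [measurable_cong]: "sets (trunc_normal \<sigma> R) = sets borel"
  by (simp add: trunc_normal_def)

lemma emeasure_trunc_normal:
  assumes "A \<in> sets borel"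
  shows "emeasure (trunc_normal \<sigma> R) A =
    ennreal (1 / central_mass \<sigma> R) * emeasure (centered_normal \<sigma>) (A \<inter> {-R..R})"
proof -
  have "emeasure (trunc_normal \<sigma> R) A = (\<integral>\<^sup>+x. ennreal (1 / central_mass \<sigma> R) *
      (ennreal (normal_density 0 \<sigma> x) * indicator (A \<inter> {-R..R}) x) \<partial>lborel)"
    unfolding trunc_normal_def using assms
    by (subst emeasure_density)
       (auto intro!: nn_integral_cong simp: indicator_def ennreal_mult'[symmetric])
  also have "\<dots> = ennreal (1 / central_mass \<sigma> R) * emeasure (centered_normal \<sigma>) (A \<inter> {-R..R})"
    using assms by (subst nn_integral_cmult) (auto simp: emeasure_density)
  finally show ?thesis .
qed

lemma prob_space_trunc_normal:
  assumes "0 < \<sigma>" "0 < R"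
  shows "prob_space (trunc_normal \<sigma> R)"
proof (rule prob_spaceI)
  interpret prob_space "centered_normal \<sigma>"
    using prob_space_centered_normal assms(1) .
  have "emeasure (trunc_normal \<sigma> R) UNIV = ennreal (1 / central_mass \<sigma> R) * ennreal (central_mass \<sigma> R)"
    by (simp add: emeasure_trunc_normal emeasure_eq_measure)
  also have "\<dots> = 1"
    using central_mass_pos[OF assms] by (simp add: ennreal_mult'[symmetric])
  finally show "emeasure (trunc_normal \<sigma> R) (space (trunc_normal \<sigma> R)) = 1"
    by (simp add: trunc_normal_def)
qed

abbreviation gauss_product :: "real \<Rightarrow> ('d::finite \<Rightarrow> real) measure" where
  "gauss_product \<sigma> \<equiv> PiM UNIV (\<lambda>_. centered_normal \<sigma>)"

abbreviation trunc_product :: "real \<Rightarrow> real \<Rightarrow> ('d::finite \<Rightarrow> real) measure" where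
  "trunc_product \<sigma> R \<equiv> PiM UNIV (\<lambda>_. trunc_normal \<sigma> R)"

lemma space_PiM_UNIV: "(\<And>i. space (M i) = UNIV) \<Longrightarrow> space (PiM UNIV M) = UNIV"
  by (simp add: space_PiM PiE_UNIV_domain)

lemma trunc_product_eq_density:
  assumes "0 < \<sigma>" "0 < R"
  shows "(trunc_product \<sigma> R :: ('d::finite \<Rightarrow> real) measure) = density (gauss_product \<sigma>)
    (\<lambda>y. ennreal ((1 / central_mass \<sigma> R) ^ CARD('d) * indicator (Pi\<^sub>E UNIV (\<lambda>_. {-R..R})) y))"
proof -
  let ?c = "1 / central_mass \<sigma> R"
  interpret T: prob_space "trunc_normal \<sigma> R"
    using prob_space_trunc_normal[OF assms] .
  interpret N: prob_space "centered_normal \<sigma>"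
    using prob_space_centered_normal assms(1) .
  interpret PT: product_sigma_finite "\<lambda>_::'d. trunc_normal \<sigma> R"
    by (simp add: product_sigma_finite_def T.sigma_finite_measure_axioms)
  interpret PG: product_sigma_finite "\<lambda>_::'d. centered_normal \<sigma>"
    by (simp add: product_sigma_finite_def N.sigma_finite_measure_axioms)
  have c: "0 < ?c"
    using central_mass_pos[OF assms] by simp
  show ?thesis
  proof (rule PT.PiM_eqI[symmetric])
    show "sets (density (gauss_product \<sigma>) (\<lambda>y. ennreal (?c ^ CARD('d) *
        indicator (Pi\<^sub>E UNIV (\<lambda>_. {-R..R})) y))) = sets (trunc_product \<sigma> R :: ('d \<Rightarrow> real) measure)"
      by (simp add: sets_trunc_normal cong: sets_PiM_cong)
  next
    fix A :: "'d \<Rightarrow> real set"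
    assume "\<And>i. i \<in> UNIV \<Longrightarrow> A i \<in> sets (trunc_normal \<sigma> R)"
    then have A: "A i \<in> sets borel" for i
      by (simp add: sets_trunc_normal)
    have "emeasure (density (gauss_product \<sigma>) (\<lambda>y. ennreal (?c ^ CARD('d) *
        indicator (Pi\<^sub>E UNIV (\<lambda>_. {-R..R})) y))) (Pi\<^sub>E UNIV A) =
        (\<integral>\<^sup>+y. ennreal (?c ^ CARD('d)) * indicator (Pi\<^sub>E UNIV (\<lambda>i. A i \<inter> {-R..R})) y \<partial>gauss_product \<sigma>)"
      using A by (subst emeasure_density)
        (auto intro!: nn_integral_cong sets_PiM_I_finite simp: indicator_def PiE_iff)
    also have "\<dots> = ennreal (?c ^ CARD('d)) * (\<Prod>i\<in>UNIV. emeasure (centered_normal \<sigma>) (A i \<inter> {-R..R}))"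
      using A by (subst nn_integral_cmult_indicator) (auto intro!: sets_PiM_I_finite simp: PG.emeasure_PiM)
    also have "\<dots> = (\<Prod>i\<in>UNIV. ennreal ?c * emeasure (centered_normal \<sigma>) (A i \<inter> {-R..R}))"
      using c by (simp add: prod.distrib ennreal_power)
    also have "\<dots> = (\<Prod>i\<in>UNIV. emeasure (trunc_normal \<sigma> R) (A i))"
      using A by (simp add: emeasure_trunc_normal)
    finally show "emeasure (density (gauss_product \<sigma>) (\<lambda>y. ennreal (?c ^ CARD('d) *
        indicator (Pi\<^sub>E UNIV (\<lambda>_. {-R..R})) y))) (Pi\<^sub>E UNIV A) =
        (\<Prod>i\<in>UNIV. emeasure (trunc_normal \<sigma> R) (A i))" .
  qed simp
qed

lemma measure_trunc_product:
  assumes "0 < \<sigma>" "0 < R" and E: "E \<in> sets (gauss_product \<sigma>)"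
  shows "measure (trunc_product \<sigma> R :: ('d::finite \<Rightarrow> real) measure) E =
    (1 / central_mass \<sigma> R) ^ CARD('d) * measure (gauss_product \<sigma>) (E \<inter> Pi\<^sub>E UNIV (\<lambda>_. {-R..R}))"
proof -
  let ?c = "1 / central_mass \<sigma> R"
  let ?B = "Pi\<^sub>E (UNIV :: 'd set) (\<lambda>_. {-R..R})"
  interpret G: prob_space "gauss_product \<sigma> :: ('d \<Rightarrow> real) measure"
    by (intro prob_space_PiM prob_space_centered_normal assms(1))
  have B: "?B \<in> sets (gauss_product \<sigma>)"
    by (auto intro!: sets_PiM_I_finite)
  have "emeasure (trunc_product \<sigma> R :: ('d \<Rightarrow> real) measure) E =
      (\<integral>\<^sup>+y. ennreal (?c ^ CARD('d)) * indicator (E \<inter> ?B) y \<partial>gauss_product \<sigma>)"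
    unfolding trunc_product_eq_density[OF assms(1,2)] using E
    by (subst emeasure_density) (auto intro!: nn_integral_cong simp: indicator_def ennreal_mult')
  also have "\<dots> = ennreal (?c ^ CARD('d) * measure (gauss_product \<sigma>) (E \<inter> ?B))"
    using E B central_mass_pos[OF assms(1,2)]
    by (subst nn_integral_cmult_indicator) (auto simp: G.emeasure_eq_measure ennreal_mult')
  finally show ?thesis
    using central_mass_pos[OF assms(1,2)] by (simp add: measure_def)
qed

section \<open>Linear statistics of Gaussian products\<close>

lemma prob_space_gauss_product: "0 < \<sigma> \<Longrightarrow> prob_space (gauss_product \<sigma>)"
  by (intro prob_space_PiM prob_space_centered_normal)

lemma distr_gauss_product_component:
  assumes "0 < \<sigma>"
  shows "distr (gauss_product \<sigma> :: ('d::finite \<Rightarrow> real) measure) borel (\<lambda>y. y i) =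
    centered_normal \<sigma>"
proof -
  have "distr (gauss_product \<sigma>) borel (\<lambda>y. y i) = distr (gauss_product \<sigma>) (centered_normal \<sigma>) (\<lambda>y. y i)"
    by (rule distr_cong) auto
  also have "\<dots> = centered_normal \<sigma>"
    by (rule distr_PiM_component) (use prob_space_centered_normal assms in auto)
  finally show ?thesis .
qed

lemma indep_vars_gauss_product_components:
  assumes "0 < \<sigma>"
  shows "prob_space.indep_vars (gauss_product \<sigma> :: ('d::finite \<Rightarrow> real) measure)
    (\<lambda>_. borel) (\<lambda>i y. y i) UNIV"
proof -
  interpret G: prob_space "gauss_product \<sigma> :: ('d \<Rightarrow> real) measure"
    using prob_space_gauss_product assms .
  have "distr (gauss_product \<sigma>) (Pi\<^sub>M UNIV (\<lambda>_. borel)) (\<lambda>y. \<lambda>i\<in>UNIV. y i) =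
      (gauss_product \<sigma> :: ('d \<Rightarrow> real) measure)"
    by (simp add: restrict_UNIV, rule distr_id2) (auto cong: sets_PiM_cong)
  also have "\<dots> = Pi\<^sub>M UNIV (\<lambda>i. distr (gauss_product \<sigma>) borel (\<lambda>y. y i))"
    by (intro PiM_cong) (simp_all add: distr_gauss_product_component[OF assms])
  finally show ?thesis
    by (subst G.indep_vars_iff_distr_eq_PiM) auto
qed

lemma distr_gauss_product_linear:
  assumes "0 < \<sigma>" and u: "(\<Sum>i\<in>UNIV. (u i)\<^sup>2) = (1::real)"
  shows "distr (gauss_product \<sigma> :: ('d::finite \<Rightarrow> real) measure) lborel (\<lambda>y. \<Sum>i\<in>UNIV. u i * y i)
    = centered_normal \<sigma>"
proof -
  interpret G: prob_space "gauss_product \<sigma> :: ('d \<Rightarrow> real) measure"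
    using prob_space_gauss_product assms(1) .
  \<comment> \<open>sum_indep_normal needs positive standard deviations, so drop the zero coefficients\<close>
  define J where "J = {i. u i \<noteq> 0}"
  have J: "J \<noteq> {}"
  proof
    assume "J = {}"
    then have "u = (\<lambda>_. 0)"
      by (auto simp: J_def)
    then show False
      using u by simp
  qed
  have component: "distributed (gauss_product \<sigma> :: ('d \<Rightarrow> real) measure) lborel (\<lambda>y. y i)
      (normal_density 0 \<sigma>)" for i
  proof -
    have "distr (gauss_product \<sigma>) lborel (\<lambda>y. y i) = distr (gauss_product \<sigma>) borel (\<lambda>y. y i)"
      by (rule distr_cong) auto
    then show ?thesis
      using distr_gauss_product_component[OF assms(1), of i] by (simp add: distributed_def)
  qed
  have "G.indep_vars (\<lambda>_. borel) (\<lambda>i y. u i * y i) UNIV"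
    using G.indep_vars_compose2[OF indep_vars_gauss_product_components[OF assms(1)],
        of "\<lambda>i x. u i * x" "\<lambda>_. borel"] by simp
  then have "G.indep_vars (\<lambda>_. borel) (\<lambda>i y. u i * y i) J"
    by (rule G.indep_vars_subset) simp
  moreover have "distributed (gauss_product \<sigma>) lborel (\<lambda>y. u i * y i)
      (normal_density 0 (\<bar>u i\<bar> * \<sigma>))" if "i \<in> J" for i
    using G.normal_density_affine[OF component assms(1), of "u i" 0] that by (simp add: J_def)
  ultimately have "distributed (gauss_product \<sigma>) lborel (\<lambda>y. \<Sum>i\<in>J. u i * y i)
      (normal_density (\<Sum>i\<in>J. 0) (sqrt (\<Sum>i\<in>J. (\<bar>u i\<bar> * \<sigma>)\<^sup>2)))"
    using assms(1) J by (intro G.sum_indep_normal) (auto simp: J_def)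
  moreover have "(\<Sum>i\<in>J. (\<bar>u i\<bar> * \<sigma>)\<^sup>2) = \<sigma>\<^sup>2"
    using u by (subst sum.mono_neutral_left[of UNIV J])
      (auto simp: J_def power_mult_distrib sum_distrib_right[symmetric])
  moreover have "(\<lambda>y. \<Sum>i\<in>J. u i * y i) = (\<lambda>y. \<Sum>i\<in>UNIV. u i * y i)"
    by (intro ext sum.mono_neutral_left) (auto simp: J_def)
  ultimately show ?thesis
    using assms(1) by (simp add: distributed_def)
qed

lemma measure_gauss_product_halfspace:
  fixes u :: "'d::finite \<Rightarrow> real"
  assumes "0 < \<sigma>" "(\<Sum>i\<in>UNIV. (u i)\<^sup>2) = 1"
  shows "measure (gauss_product \<sigma>) {y. t < (\<Sum>i\<in>UNIV. u i * y i)} = normal_tail \<sigma> t"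
    and "measure (gauss_product \<sigma>) {y. t \<le> (\<Sum>i\<in>UNIV. u i * y i)} = normal_tail \<sigma> t"
proof -
  let ?X = "\<lambda>y::'d \<Rightarrow> real. \<Sum>i\<in>UNIV. u i * y i"
  have X: "?X \<in> measurable (gauss_product \<sigma>) lborel"
    by simp
  have "measure (gauss_product \<sigma>) (?X -` S) = measure (centered_normal \<sigma>) S" if "S \<in> sets borel" for S
    using that X measure_distr[OF X, of S] distr_gauss_product_linear[OF assms]
    by (simp add: space_PiM_UNIV)
  from this[of "{t<..}"] this[of "{t..}"] show
    "measure (gauss_product \<sigma>) {y. t < ?X y} = normal_tail \<sigma> t"
    "measure (gauss_product \<sigma>) {y. t \<le> ?X y} = normal_tail \<sigma> t"
    using measure_centered_normal_atLeast[OF assms(1)] by (simp_all add: vimage_def)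
qed

lemma measure_gauss_product_outside_box:
  assumes "0 < \<sigma>"
  shows "measure (gauss_product \<sigma> :: ('d::finite \<Rightarrow> real) measure) (UNIV - Pi\<^sub>E UNIV (\<lambda>_. {-R..R}))
    \<le> 2 * real CARD('d) * normal_tail \<sigma> R"
proof -
  interpret G: prob_space "gauss_product \<sigma> :: ('d \<Rightarrow> real) measure"
    using prob_space_gauss_product assms .
  interpret N: prob_space "centered_normal \<sigma>"
    using prob_space_centered_normal assms .
  let ?O = "\<lambda>i. {y::'d \<Rightarrow> real. y i \<notin> {-R..R}}"
  have O: "?O i = (\<lambda>y. y i) -` ({..<-R} \<union> {R<..}) \<inter> space (gauss_product \<sigma>)" for i
    by (auto simp: space_PiM_UNIV)
  have O_sets: "?O i \<in> sets (gauss_product \<sigma>)" for i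
    unfolding O by measurable
  have "measure (gauss_product \<sigma>) (?O i) \<le> 2 * normal_tail \<sigma> R" for i
  proof -
    have "measure (gauss_product \<sigma>) (?O i) = measure (centered_normal \<sigma>) ({..<-R} \<union> {R<..})"
      unfolding O using distr_gauss_product_component[OF assms, of i]
        measure_distr[of "\<lambda>y. y i" "gauss_product \<sigma>" borel "{..<-R} \<union> {R<..}"]
      by simp
    also have "\<dots> \<le> measure (centered_normal \<sigma>) {..<-R} + normal_tail \<sigma> R"
      by (rule measure_Un_le) auto
    finally show ?thesis
      using measure_centered_normal_lessThan[of \<sigma> R] by simp
  qed
  moreover have "UNIV - Pi\<^sub>E UNIV (\<lambda>_. {-R..R}) = (\<Union>i. ?O i)"
    by (auto simp: PiE_iff)
  moreover have "measure (gauss_product \<sigma>) (\<Union>i. ?O i) \<le> (\<Sum>i\<in>UNIV. measure (gauss_product \<sigma>) (?O i))"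
    using O_sets by (intro G.finite_measure_subadditive_finite) auto
  ultimately show ?thesis
    using sum_mono[of UNIV "\<lambda>i. measure (gauss_product \<sigma>) (?O i)" "\<lambda>_. 2 * normal_tail \<sigma> R"]
    by simp
qed

section \<open>Margins of orthogonal perturbations\<close>

lemma (in finite_measure) measure_diff_compl_le_Int:
  assumes "A \<in> sets M" "B \<in> sets M"
  shows "measure M A - measure M (space M - B) \<le> measure M (A \<inter> B)"
proof -
  have "measure M A \<le> measure M ((A \<inter> B) \<union> (space M - B))"
    using assms sets.sets_into_space by (intro finite_measure_mono) auto
  also have "\<dots> \<le> measure M (A \<inter> B) + measure M (space M - B)"
    using assms by (intro measure_Un_le) auto
  finally show ?thesis by simp
qed

lemma sets_gauss_product_halfspace:
  shows "{z. t < (\<Sum>i\<in>UNIV. u i * z i)} \<in> sets (gauss_product \<sigma> :: ('d::finite \<Rightarrow> real) measure)"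
    and "{z. t \<le> (\<Sum>i\<in>UNIV. u i * z i)} \<in> sets (gauss_product \<sigma> :: ('d::finite \<Rightarrow> real) measure)"
proof -
  have "{z \<in> space (gauss_product \<sigma>). t < (\<Sum>i\<in>UNIV. u i * z i)} \<in> sets (gauss_product \<sigma>)"
    "{z \<in> space (gauss_product \<sigma>). t \<le> (\<Sum>i\<in>UNIV. u i * z i)} \<in> sets (gauss_product \<sigma>)"
    by measurable
  then show "{z. t < (\<Sum>i\<in>UNIV. u i * z i)} \<in> sets (gauss_product \<sigma> :: ('d \<Rightarrow> real) measure)"
    "{z. t \<le> (\<Sum>i\<in>UNIV. u i * z i)} \<in> sets (gauss_product \<sigma> :: ('d \<Rightarrow> real) measure)"
    by (simp_all add: space_PiM_UNIV)
qed

lemma measure_gauss_product_halfspace_box_ge: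
  fixes u :: "'d::finite \<Rightarrow> real"
  assumes s: "0 < \<sigma>" and r: "2 * \<sigma> \<le> r"
    and R: "5 * r / 4 + \<sigma> * sqrt (2 * ln (8 * real CARD('d))) \<le> R"
    and u: "(\<Sum>i\<in>UNIV. (u i)\<^sup>2) = 1" and b: "b \<le> r"
  shows "normal_tail \<sigma> b / 80 \<le> measure (gauss_product \<sigma>)
    ({z. b + \<sigma>\<^sup>2 / r < (\<Sum>i\<in>UNIV. u i * z i)} \<inter> Pi\<^sub>E UNIV (\<lambda>_. {-R..R}))"
proof -
  let ?G = "gauss_product \<sigma> :: ('d \<Rightarrow> real) measure"
  let ?B = "Pi\<^sub>E (UNIV :: 'd set) (\<lambda>_. {-R..R})"
  interpret G: prob_space ?G
    using prob_space_gauss_product s .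
  have "1 \<le> real CARD('d)"
    by (simp add: Suc_le_eq)
  then have "normal_tail \<sigma> b / 80 \<le>
      normal_tail \<sigma> (b + \<sigma>\<^sup>2 / r) - 2 * real CARD('d) * normal_tail \<sigma> R"
    using normal_tail_margin[OF s r _ R b] by simp
  also have "\<dots> \<le> measure ?G {z. b + \<sigma>\<^sup>2 / r < (\<Sum>i\<in>UNIV. u i * z i)} - measure ?G (space ?G - ?B)"
    using measure_gauss_product_halfspace(1)[OF s u] measure_gauss_product_outside_box[OF s, of R]
    by (simp add: space_PiM_UNIV)
  also have "\<dots> \<le> measure ?G ({z. b + \<sigma>\<^sup>2 / r < (\<Sum>i\<in>UNIV. u i * z i)} \<inter> ?B)"
    by (intro G.measure_diff_compl_le_Int sets_gauss_product_halfspace sets_PiM_I_finite) auto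
  finally show ?thesis .
qed

lemma trunc_product_unit_halfspace_ratio:
  fixes u :: "'d::finite \<Rightarrow> real"
  assumes s: "0 < \<sigma>" and r: "2 * \<sigma> \<le> r"
    and R: "5 * r / 4 + \<sigma> * sqrt (2 * ln (8 * real CARD('d))) \<le> R"
    and u: "(\<Sum>i\<in>UNIV. (u i)\<^sup>2) = 1" and b: "b \<le> r"
  shows "1 / 80 \<le> measure (trunc_product \<sigma> R) {z. b + \<sigma>\<^sup>2 / r < (\<Sum>i\<in>UNIV. u i * z i)} /
    measure (trunc_product \<sigma> R) {z. b \<le> (\<Sum>i\<in>UNIV. u i * z i)}"
proof -
  let ?G = "gauss_product \<sigma> :: ('d \<Rightarrow> real) measure"
  let ?T = "trunc_product \<sigma> R :: ('d \<Rightarrow> real) measure"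
  let ?A = "{z::'d \<Rightarrow> real. b + \<sigma>\<^sup>2 / r < (\<Sum>i\<in>UNIV. u i * z i)}"
  let ?C = "{z::'d \<Rightarrow> real. b \<le> (\<Sum>i\<in>UNIV. u i * z i)}"
  let ?B = "Pi\<^sub>E (UNIV :: 'd set) (\<lambda>_. {-R..R})"
  let ?k = "(1 / central_mass \<sigma> R) ^ CARD('d)"
  interpret G: prob_space ?G
    using prob_space_gauss_product s .
  have "1 \<le> real CARD('d)"
    by (simp add: Suc_le_eq)
  then have "0 \<le> ln (8 * real CARD('d))"
    by (intro ln_ge_zero) linarith
  then have "0 \<le> \<sigma> * sqrt (2 * ln (8 * real CARD('d)))"
    using s by simp
  then have R0: "0 < R"
    using s r R by linarith
  have k: "0 < ?k"
    using central_mass_pos[OF s R0] by simp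
  have A: "?A \<in> sets ?G" and C: "?C \<in> sets ?G"
    by (rule sets_gauss_product_halfspace)+
  have "?k * (normal_tail \<sigma> b / 80) \<le> measure ?T ?A"
    using k measure_trunc_product[OF s R0 A] measure_gauss_product_halfspace_box_ge[OF s r R u b]
    by simp
  moreover have "measure ?T ?C \<le> ?k * normal_tail \<sigma> b"
    using k measure_trunc_product[OF s R0 C] measure_gauss_product_halfspace(2)[OF s u]
      G.finite_measure_mono[of "?C \<inter> ?B" ?C] C by simp
  moreover have "measure ?T ?A \<le> measure ?T ?C"
  proof -
    have "0 < \<sigma>\<^sup>2 / r"
      using s r by simp
    then have "measure ?G (?A \<inter> ?B) \<le> measure ?G (?C \<inter> ?B)"
      using C by (intro G.finite_measure_mono) (auto intro!: sets_PiM_I_finite)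
    then show ?thesis
      using k measure_trunc_product[OF s R0 A] measure_trunc_product[OF s R0 C] by simp
  qed
  moreover have "0 < ?k * normal_tail \<sigma> b"
    using k normal_tail_pos[OF s] by simp
  ultimately show ?thesis
    by (simp add: le_divide_eq)
qed

lemma trunc_product_halfspace_ratio:
  fixes v :: "'d::finite \<Rightarrow> real"
  assumes s: "0 < \<sigma>" and r: "2 * \<sigma> \<le> r"
    and R: "5 * r / 4 + \<sigma> * sqrt (2 * ln (8 * real CARD('d))) \<le> R"
    and v: "(\<Sum>i\<in>UNIV. (v i)\<^sup>2) = n\<^sup>2" and n: "0 < n" and b: "b \<le> r * n"
  shows "1 / 80 \<le> measure (trunc_product \<sigma> R) {z. b + \<sigma>\<^sup>2 / r * n < (\<Sum>i\<in>UNIV. v i * z i)} /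
    measure (trunc_product \<sigma> R) {z. b \<le> (\<Sum>i\<in>UNIV. v i * z i)}"
proof -
  define u where "u i = v i / n" for i
  have u: "(\<Sum>i\<in>UNIV. (u i)\<^sup>2) = 1"
    using v n by (simp add: u_def power_divide sum_divide_distrib[symmetric])
  have scale: "(\<Sum>i\<in>UNIV. v i * z i) = n * (\<Sum>i\<in>UNIV. u i * z i)" for z
    using n by (simp add: u_def sum_distrib_left)
  have "{z. b + \<sigma>\<^sup>2 / r * n < (\<Sum>i\<in>UNIV. v i * z i)} = {z. b / n + \<sigma>\<^sup>2 / r < (\<Sum>i\<in>UNIV. u i * z i)}"
    "{z. b \<le> (\<Sum>i\<in>UNIV. v i * z i)} = {z. b / n \<le> (\<Sum>i\<in>UNIV. u i * z i)}"
    unfolding scale using n by (auto simp: field_simps)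
  moreover have "b / n \<le> r"
    using b n by (simp add: divide_le_eq mult.commute)
  ultimately show ?thesis
    using trunc_product_unit_halfspace_ratio[OF s r R u] by simp
qed

lemma matrix_inv_orthogonal:
  fixes Q :: "'a::comm_semiring_1^'n^'n"
  assumes "orthogonal_matrix Q"
  shows "matrix_inv Q = transpose Q"
proof -
  have Q: "Q ** transpose Q = mat 1 \<and> transpose Q ** Q = mat 1"
    using assms by (simp add: orthogonal_matrix_def)
  then have inv: "Q ** matrix_inv Q = mat 1 \<and> matrix_inv Q ** Q = mat 1"
    unfolding matrix_inv_def by (rule someI)
  then have "matrix_inv Q = matrix_inv Q ** (Q ** transpose Q)"
    using Q by simp
  also have "\<dots> = transpose Q"
    using inv by (simp add: matrix_mul_assoc)
  finally show ?thesis .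
qed

lemma orthogonal_matrix_sum_square:
  fixes Q :: "real^'n^'n"
  assumes "orthogonal_matrix Q"
  shows "(\<Sum>j\<in>UNIV. ((Q *v x) $ j)\<^sup>2) = (norm x)\<^sup>2"
proof -
  have "(\<Sum>j\<in>UNIV. ((Q *v x) $ j)\<^sup>2) = (Q *v x) \<bullet> (Q *v x)"
    by (simp add: inner_vec_def power2_eq_square)
  also have "\<dots> = ((Q *v x) v* Q) \<bullet> x"
    by (simp add: dot_lmul_matrix)
  also have "(Q *v x) v* Q = (transpose Q ** Q) *v x"
    by (simp add: matrix_vector_mul_assoc[symmetric])
  also have "\<dots> = x"
    using assms by (simp add: orthogonal_matrix_def)
  finally show ?thesis
    by (simp add: power2_norm_eq_inner)
qed

lemma inner_matrix_vector_mult_lambda: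
  fixes A :: "real^'n^'m"
  shows "w \<bullet> (A *v (\<chi> i. y i)) = (\<Sum>j\<in>UNIV. (w v* A) $ j * y j)"
  by (simp only: dot_lmul_matrix[symmetric]) (simp add: inner_vec_def)

lemma inner_perturbation:
  fixes Q :: "real^'d::finite^'d"
  assumes "orthogonal_matrix Q"
  shows "\<beta> \<bullet> (matrix_inv Q *v (\<chi> i. z i)) = (\<Sum>j\<in>UNIV. (Q *v \<beta>) $ j * z j)"
  unfolding matrix_inv_orthogonal[OF assms] inner_matrix_vector_mult_lambda by simp

lemma space_perturbation_distr: "space (perturbation_distr \<sigma> R Q) = UNIV"
  by (simp add: perturbation_distr_def)

lemma measure_perturbation_distr_inner:
  fixes Q :: "real^'d::finite^'d"
  assumes Q: "orthogonal_matrix Q" and S: "S \<in> sets borel"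
  shows "measure (perturbation_distr \<sigma> R Q) {e. \<beta> \<bullet> e \<in> S} =
    measure (trunc_product \<sigma> R) {z. (\<Sum>j\<in>UNIV. (Q *v \<beta>) $ j * z j) \<in> S}"
proof -
  let ?f = "\<lambda>z::'d \<Rightarrow> real. matrix_inv Q *v (\<chi> i. z i)"
  have "(\<lambda>z. ?f z \<bullet> e) \<in> borel_measurable (trunc_product \<sigma> R)" for e
  proof -
    have "(\<lambda>z. ?f z \<bullet> e) = (\<lambda>z. \<Sum>j\<in>UNIV. (e v* matrix_inv Q) $ j * z j)"
      by (simp add: inner_commute[of _ e] inner_matrix_vector_mult_lambda)
    then show ?thesis
      by simp
  qed
  then have f: "?f \<in> borel_measurable (trunc_product \<sigma> R)"
    by (subst borel_measurable_euclidean_space) blast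
  have "{e. \<beta> \<bullet> e \<in> S} = {e \<in> space borel. \<beta> \<bullet> e \<in> S}"
    by simp
  also have "\<dots> \<in> sets borel"
    using S by measurable
  finally have "measure (perturbation_distr \<sigma> R Q) {e. \<beta> \<bullet> e \<in> S} =
      measure (trunc_product \<sigma> R) (?f -` {e. \<beta> \<bullet> e \<in> S} \<inter> space (trunc_product \<sigma> R))"
    unfolding perturbation_distr_def by (rule measure_distr[OF f])
  also have "?f -` {e. \<beta> \<bullet> e \<in> S} \<inter> space (trunc_product \<sigma> R) =
      {z. (\<Sum>j\<in>UNIV. (Q *v \<beta>) $ j * z j) \<in> S}"
    using Q by (simp add: inner_perturbation space_PiM_UNIV trunc_normal_def)
  finally show ?thesis .
qed

theorem corollary3:
  fixes \<sigma> r R :: real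
  assumes "\<sigma> > 0"
    and "r \<ge> 2 * \<sigma>"
    and "R \<ge> 5 * r / 4 + \<sigma> * sqrt (2 * ln (8 * real CARD('d::finite)))"
  shows "adversary_has_margins \<sigma> R TYPE('d) r (\<sigma>^2 / r) (1/80)"
  unfolding adversary_has_margins_def has_margins_def
proof (intro allI impI)
  fix Q :: "real^'d^'d" and \<beta> :: "real^'d" and b :: real
  assume Q: "orthogonal_matrix Q" and "\<beta> \<noteq> 0" and b: "b \<le> r * norm \<beta>"
  let ?D = "perturbation_distr \<sigma> R Q"
  let ?T = "trunc_product \<sigma> R :: ('d \<Rightarrow> real) measure"
  let ?X = "\<lambda>z. \<Sum>j\<in>UNIV. (Q *v \<beta>) $ j * z j"
  have "0 < \<sigma>\<^sup>2 / r * norm \<beta>"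
    using assms \<open>\<beta> \<noteq> 0\<close> by simp
  then have "cond_prob ?D (\<lambda>e. \<beta> \<bullet> e > b + \<sigma>\<^sup>2 / r * norm \<beta>) (\<lambda>e. \<beta> \<bullet> e \<ge> b) =
      measure ?D {e. \<beta> \<bullet> e \<in> {b + \<sigma>\<^sup>2 / r * norm \<beta><..}} / measure ?D {e. \<beta> \<bullet> e \<in> {b..}}"
    by (auto simp: cond_prob_def space_perturbation_distr
        intro!: arg_cong2[where f = "(/)"] arg_cong[where f = "measure ?D"])
  also have "\<dots> = measure ?T {z. b + \<sigma>\<^sup>2 / r * norm \<beta> < ?X z} / measure ?T {z. b \<le> ?X z}"
    using measure_perturbation_distr_inner[OF Q, of "{b + \<sigma>\<^sup>2 / r * norm \<beta><..}"]
      measure_perturbation_distr_inner[OF Q, of "{b..}"] by simp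
  also have "1 / 80 \<le> \<dots>"
    using assms \<open>\<beta> \<noteq> 0\<close> b
    by (intro trunc_product_halfspace_ratio orthogonal_matrix_sum_square[OF Q]) auto
  finally show "cond_prob ?D (\<lambda>e. \<beta> \<bullet> e > b + \<sigma>\<^sup>2 / r * norm \<beta>) (\<lambda>e. \<beta> \<bullet> e \<ge> b) \<ge> 1 / 80" .
qed

end
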